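(* Let $\mathcal C$ be a category of noncrossing $\{x,y\}$-coloured partitions ($x^{-1}=x$, $y^{-1}=y$) all of whose blocks have even size. If $\mathcal C$ contains a partition with a block of size at least four, then $\pi(xx,xx)\in\mathcal C$ or $\pi(yy,yy)\in\mathcal C$.
   Context: Colour sets and partitions: a colour set is a set $\mathcal A$ with an involution $a\mapsto a^{-1}$. For words $w,w'$ on $\mathcal A$, an element of $P^{\mathcal A}(w,w')$ is a partition of $|w|+|w'|$ points drawn as an upper row coloured (left to right) by $w$ and a lower row coloured by $w'$; its subsets are blocks. It is noncrossing if there are no four points $k_1<k_2<k_3<k_4$ (ordering: upper row left to right, then lower row right to left) with $k_1,k_3$ in one block and $k_2,k_4$ in a different block. Category operations: tensor product, composition (erasing middle points and closed loops), adjoint (reflection), rotation (moving an extreme point to the other row and replacing its colour $a$ by $a^{-1}$). A category of noncrossing partitions is a family $\mathcal C(w,w')\subset NC^{\mathcal A}(w,w')$ stable under these operations and containing $\pi(a,a)$ for all $a$. $\pi(w,w')$ denotes the one-block partition in $NC(w,w')$. *)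

theory Defs
  imports Main "HOL-Library.Disjoint_Sets"
begin

text \<open>Points of a partition in P(w,w'): Up i is the i-th upper point (left to right,
  starting at 0), Lo j is the j-th lower point (left to right, starting at 0).\<close>
datatype pt = Up nat | Lo nat

text \<open>A coloured partition: (upper word w, lower word w', set of blocks).\<close>
type_synonym 'a part = "'a list \<times> 'a list \<times> pt set set"

definition points :: "nat \<Rightarrow> nat \<Rightarrow> pt set" where
  "points n m = {Up i | i. i < n} \<union> {Lo j | j. j < m}"

definition is_part :: "'a part \<Rightarrow> bool" where
  "is_part p = (case p of (w, v, B) \<Rightarrow> partition_on (points (length w) (length v)) B)"

fun pos :: "nat \<Rightarrow> nat \<Rightarrow> pt \<Rightarrow> nat" where
  "pos n m (Up i) = i"
| "pos n m (Lo j) = n + (m - 1 - j)"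

definition noncrossing :: "'a part \<Rightarrow> bool" where
  "noncrossing p = (case p of (w, v, B) \<Rightarrow>
     \<not> (\<exists>b1\<in>B. \<exists>b2\<in>B. b1 \<noteq> b2 \<and> (\<exists>k1 k2 k3 k4.
          k1 \<in> b1 \<and> k3 \<in> b1 \<and> k2 \<in> b2 \<and> k4 \<in> b2 \<and>
          pos (length w) (length v) k1 < pos (length w) (length v) k2 \<and>
          pos (length w) (length v) k2 < pos (length w) (length v) k3 \<and>
          pos (length w) (length v) k3 < pos (length w) (length v) k4)))"

fun shift :: "nat \<Rightarrow> nat \<Rightarrow> pt \<Rightarrow> pt" where
  "shift n m (Up i) = Up (i + n)"
| "shift n m (Lo j) = Lo (j + m)"

definition tensor :: "'a part \<Rightarrow> 'a part \<Rightarrow> 'a part" where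
  "tensor p q = (case p of (w1, v1, B1) \<Rightarrow> case q of (w2, v2, B2) \<Rightarrow>
     (w1 @ w2, v1 @ v2, B1 \<union> (image (shift (length w1) (length v1))) ` B2))"

fun swp :: "pt \<Rightarrow> pt" where
  "swp (Up i) = Lo i"
| "swp (Lo i) = Up i"

definition adjoint :: "'a part \<Rightarrow> 'a part" where
  "adjoint p = (case p of (w, v, B) \<Rightarrow> (v, w, (image swp) ` B))"

text \<open>Composition: p in P(w,v) on top, q in P(v,u) below; middle points are identified,
  connected components are formed, and middle points (and closed loops) are erased.\<close>
fun cfp :: "pt \<Rightarrow> pt + nat" where
  "cfp (Up i) = Inl (Up i)"
| "cfp (Lo j) = Inr j"

fun cfq :: "pt \<Rightarrow> pt + nat" where
  "cfq (Up j) = Inr j"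
| "cfq (Lo k) = Inl (Lo k)"

definition comp_edges :: "pt set set \<Rightarrow> pt set set \<Rightarrow> ((pt + nat) \<times> (pt + nat)) set" where
  "comp_edges B D =
     {(cfp a, cfp b) | a b. \<exists>blk\<in>B. a \<in> blk \<and> b \<in> blk}
   \<union> {(cfq a, cfq b) | a b. \<exists>blk\<in>D. a \<in> blk \<and> b \<in> blk}"

definition compose :: "'a part \<Rightarrow> 'a part \<Rightarrow> 'a part" where
  "compose p q = (case p of (w, v, B) \<Rightarrow> case q of (v', u, D) \<Rightarrow>
     (w, u, (\<lambda>a. {b \<in> points (length w) (length u).
                     (Inl a, Inl b) \<in> (comp_edges B D)\<^sup>*}) ` points (length w) (length u)))"

text \<open>Rotations: moving an extreme point to the other row, replacing its colour a by inv a.\<close>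
fun rUL :: "pt \<Rightarrow> pt" where
  "rUL (Up 0) = Lo 0"
| "rUL (Up (Suc i)) = Up i"
| "rUL (Lo j) = Lo (Suc j)"

fun rLU :: "pt \<Rightarrow> pt" where
  "rLU (Lo 0) = Up 0"
| "rLU (Lo (Suc j)) = Lo j"
| "rLU (Up i) = Up (Suc i)"

fun rUR :: "nat \<Rightarrow> nat \<Rightarrow> pt \<Rightarrow> pt" where
  "rUR n m (Up i) = (if i = n then Lo m else Up i)"
| "rUR n m (Lo j) = Lo j"

fun rLR :: "nat \<Rightarrow> nat \<Rightarrow> pt \<Rightarrow> pt" where
  "rLR n m (Lo j) = (if j = m then Up n else Lo j)"
| "rLR n m (Up i) = Up i"

definition one_block :: "'a list \<Rightarrow> 'a list \<Rightarrow> 'a part" where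
  "one_block w v = (w, v, {points (length w) (length v)})"

definition nc_category :: "('a \<Rightarrow> 'a) \<Rightarrow> 'a part set \<Rightarrow> bool" where
  "nc_category cinv C =
    ((\<forall>p\<in>C. is_part p \<and> noncrossing p)
   \<and> (\<forall>a. one_block [a] [a] \<in> C)
   \<and> (\<forall>p\<in>C. \<forall>q\<in>C. tensor p q \<in> C)
   \<and> (\<forall>w v u B D. (w, v, B) \<in> C \<longrightarrow> (v, u, D) \<in> C \<longrightarrow> compose (w, v, B) (v, u, D) \<in> C)
   \<and> (\<forall>p\<in>C. adjoint p \<in> C)
   \<and> (\<forall>a w v B. (a # w, v, B) \<in> C \<longrightarrow> (w, cinv a # v, (image rUL) ` B) \<in> C)
   \<and> (\<forall>a w v B. (w, a # v, B) \<in> C \<longrightarrow> (cinv a # w, v, (image rLU) ` B) \<in> C)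
   \<and> (\<forall>a w v B. (w @ [a], v, B) \<in> C \<longrightarrow>
        (w, v @ [cinv a], (image (rUR (length w) (length v))) ` B) \<in> C)
   \<and> (\<forall>a w v B. (w, v @ [a], B) \<in> C \<longrightarrow>
        (w @ [cinv a], v, (image (rLR (length w) (length v))) ` B) \<in> C))"

datatype col = X | Y

end

theory Submission
  imports Defs
begin

text \<open>Take three points of one block and rotate the partition so that two of them become the
  two end points of the upper row while the third stays on the lower row. Composing with the
  adjoint glues the two copies together through that lower point: the result lies in
  \<open>P(w, w)\<close> and has a block containing the first and last upper point and the last lower
  point. Rotated down, the last lower point and the last upper point become neighbours, so
  repeating the construction produces an upper row of length two, and one more composition
  with the adjoint gives a one-block partition \<open>\<pi>(ab, ab)\<close>. Two rotations move \<open>a\<close> to the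
  lower row and a copy of \<open>b\<inverse>\<close> to the upper one, and composing the result with its adjoint
  yields \<open>\<pi>(bb\<inverse>, bb\<inverse>)\<close>.\<close>

lemma three_le_card_obtain_less:
  fixes J :: "'a::linorder set"
  assumes "3 \<le> card J"
  obtains a b c where "a < b" "b < c" "{a, b, c} \<subseteq> J"
proof -
  obtain x y z where xyz: "{x, y, z} \<subseteq> J" "x \<noteq> y" "y \<noteq> z" "x \<noteq> z"
    using assms by (auto simp: numeral_3_eq_3 card_le_Suc_iff)
  show thesis
  proof (cases x y rule: linorder_cases; cases y z rule: linorder_cases; cases x z rule: linorder_cases)
  qed (use xyz that in \<open>auto simp: insert_commute\<close>)
qed

text \<open>Only the lengths of the colour words are recorded: the argument moves points around,
  and colours matter only at the very end.\<close>
definition block_through :: "'a part set \<Rightarrow> nat \<Rightarrow> nat \<Rightarrow> pt set \<Rightarrow> bool" where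
  "block_through C n m S \<longleftrightarrow>
     (\<exists>w v B. (w, v, B) \<in> C \<and> length w = n \<and> length v = m \<and> (\<exists>b\<in>B. S \<subseteq> b))"

lemma block_throughI:
  "(w, v, B) \<in> C \<Longrightarrow> b \<in> B \<Longrightarrow> S \<subseteq> b \<Longrightarrow> block_through C (length w) (length v) S"
  unfolding block_through_def by blast

lemma block_through_image:
  assumes "block_through C n m S"
    and "\<And>w v B. (w, v, B) \<in> C \<Longrightarrow> length w = n \<Longrightarrow> length v = m \<Longrightarrow>
           \<exists>w' v'. (w', v', image f ` B) \<in> C \<and> length w' = n' \<and> length v' = m'"
  shows "block_through C n' m' (f ` S)"
proof -
  obtain w v B b where wvB: "(w, v, B) \<in> C" "length w = n" "length v = m" "b \<in> B" "S \<subseteq> b"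
    using assms(1) unfolding block_through_def by blast
  then obtain w' v' where inC: "(w', v', image f ` B) \<in> C" and "length w' = n'" "length v' = m'"
    using assms(2) by blast
  moreover have "f ` b \<in> image f ` B" "f ` S \<subseteq> f ` b"
    using wvB(4,5) by auto
  then have "block_through C (length w') (length v') (f ` S)"
    by (rule block_throughI[OF inC])
  ultimately show ?thesis by simp
qed

lemma block_through_mono: "block_through C n m S \<Longrightarrow> T \<subseteq> S \<Longrightarrow> block_through C n m T"
  unfolding block_through_def by blast

text \<open>Position on the lower row reached by a point of \<open>P(n, m)\<close> once the whole upper row has
  been rotated, rightmost point first, onto the right end of the lower row.\<close>
fun lower_index :: "nat \<Rightarrow> nat \<Rightarrow> pt \<Rightarrow> nat" where
  "lower_index n m (Up i) = m + n - 1 - i"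
| "lower_index n m (Lo j) = j"

lemma lower_index_rUR: "lower_index n (Suc m) (rUR n m x) = lower_index (Suc n) m x"
  by (cases x) auto

lemma rLR_rUR: "x \<in> points (Suc n) m \<Longrightarrow> rLR n m (rUR n m x) = x"
  by (cases x) (auto simp: points_def)

lemma rUR_points: "x \<in> points (Suc n) m \<Longrightarrow> rUR n m x \<in> points n (Suc m)"
  by (cases x) (auto simp: points_def)

lemma inj_on_lower_index: "inj_on (lower_index n m) (points n m)"
  by (auto simp: inj_on_def points_def)

lemma points2: "points 2 2 = {Up 0, Up 1, Lo 0, Lo 1}"
  unfolding points_def by (auto simp: less_2_cases_iff)

lemma part_eq_one_block:
  assumes "is_part (w, v, B)" "b \<in> B" "points (length w) (length v) \<subseteq> b"
  shows "(w, v, B) = one_block w v"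
proof -
  let ?P = "points (length w) (length v)"
  have part: "partition_on ?P B" using assms(1) by (simp add: is_part_def)
  then have "b = ?P" using assms(2,3) partition_onD1 by blast
  moreover have "b' = ?P" if "b' \<in> B" for b'
    using part that assms(2) \<open>b = ?P\<close> partition_onD1 partition_onD3
    by (metis Sup_upper disjointD partition_onD2 le_iff_inf)
  ultimately have "B = {?P}" using assms(2) by blast
  then show ?thesis by (simp add: one_block_def)
qed

lemma comp_edges_adjoint:
  assumes "b \<in> B" "Up i \<in> b" "Lo l \<in> b"
  shows "(Inl (Up i), Inr l) \<in> comp_edges B (image swp ` B)"
    and "(Inr l, Inl (Up i)) \<in> comp_edges B (image swp ` B)"
    and "(Inr l, Inl (Lo i)) \<in> comp_edges B (image swp ` B)"
proof -
  have upper: "(cfp x, cfp y) \<in> comp_edges B (image swp ` B)" if "x \<in> b" "y \<in> b" for x y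
    using assms(1) that unfolding comp_edges_def by blast
  have "swp ` b \<in> image swp ` B" "Up l \<in> swp ` b" "Lo i \<in> swp ` b"
    using assms by (auto intro: image_eqI[where f = swp, OF swp.simps(1)[symmetric]]
                                image_eqI[where f = swp, OF swp.simps(2)[symmetric]])
  then have lower: "(cfq (Up l), cfq (Lo i)) \<in> comp_edges B (image swp ` B)"
    unfolding comp_edges_def by blast
  show "(Inl (Up i), Inr l) \<in> comp_edges B (image swp ` B)"
    using upper[OF assms(2,3)] by simp
  show "(Inr l, Inl (Up i)) \<in> comp_edges B (image swp ` B)"
    using upper[OF assms(3,2)] by simp
  show "(Inr l, Inl (Lo i)) \<in> comp_edges B (image swp ` B)"
    using lower by simp
qed

text \<open>The middle point \<open>l\<close> links every upper point of the block to both of its copies in the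
  composite.\<close>
lemma compose_adjoint_block:
  assumes "b \<in> B" "Lo l \<in> b" "Up ` I \<subseteq> b" "i \<in> I" "I \<subseteq> {..<length w}"
  shows "\<exists>B'. Defs.compose (w, v, B) (adjoint (w, v, B)) = (w, w, B') \<and> (\<exists>b'\<in>B'. Up ` I \<union> Lo ` I \<subseteq> b')"
proof -
  let ?E = "comp_edges B (image swp ` B)"
  let ?P = "points (length w) (length w)"
  let ?cl = "\<lambda>a. {c \<in> ?P. (Inl a, Inl c) \<in> ?E\<^sup>*}"
  have "Defs.compose (w, v, B) (adjoint (w, v, B)) = (w, w, ?cl ` ?P)"
    by (simp add: adjoint_def compose_def)
  moreover have "Up i \<in> ?P" using assms(4,5) by (auto simp: points_def)
  moreover have "Up ` I \<union> Lo ` I \<subseteq> ?cl (Up i)"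
  proof
    fix c assume c: "c \<in> Up ` I \<union> Lo ` I"
    then obtain j where j: "j \<in> I" "c = Up j \<or> c = Lo j" by blast
    have "Up j \<in> b" "Up i \<in> b" using j(1) assms(3,4) by auto
    then have "(Inr l, Inl c) \<in> ?E" "(Inl (Up i), Inr l) \<in> ?E"
      using j(2) comp_edges_adjoint[OF assms(1) _ assms(2)] by auto
    then have "(Inl (Up i), Inl c) \<in> ?E\<^sup>*"
      by (meson converse_rtrancl_into_rtrancl r_into_rtrancl)
    moreover have "c \<in> ?P" using j assms(5) by (auto simp: points_def)
    ultimately show "c \<in> ?cl (Up i)" by simp
  qed
  ultimately show ?thesis by (intro exI[of _ "?cl ` ?P"]) blast
qed

context
  fixes cinv :: "'a \<Rightarrow> 'a" and C :: "'a part set"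
  assumes cat: "nc_category cinv C"
begin

lemma in_nc_category_is_part: "p \<in> C \<Longrightarrow> is_part p"
  using cat unfolding nc_category_def by (elim conjE) blast

lemma nc_category_adjoint: "p \<in> C \<Longrightarrow> adjoint p \<in> C"
  using cat unfolding nc_category_def by (elim conjE) blast

lemma nc_category_compose:
  "(w, v, B) \<in> C \<Longrightarrow> (v, u, D) \<in> C \<Longrightarrow> Defs.compose (w, v, B) (v, u, D) \<in> C"
  using cat unfolding nc_category_def by (elim conjE) blast

lemma nc_category_rUL: "(a # w, v, B) \<in> C \<Longrightarrow> (w, cinv a # v, image rUL ` B) \<in> C"
  using cat unfolding nc_category_def by simp

lemma nc_category_rUR:
  "(w @ [a], v, B) \<in> C \<Longrightarrow> (w, v @ [cinv a], image (rUR (length w) (length v)) ` B) \<in> C"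
  using cat unfolding nc_category_def by simp

lemma nc_category_rLR:
  "(w, v @ [a], B) \<in> C \<Longrightarrow> (w @ [cinv a], v, image (rLR (length w) (length v)) ` B) \<in> C"
  using cat unfolding nc_category_def by simp

lemma block_through_subset_points:
  assumes "block_through C n m S"
  shows "S \<subseteq> points n m"
proof -
  obtain w v B b where "(w, v, B) \<in> C" "length w = n" "length v = m" "b \<in> B" "S \<subseteq> b"
    using assms unfolding block_through_def by blast
  moreover have "partition_on (points n m) B"
    using in_nc_category_is_part calculation(1-3) by (auto simp: is_part_def)
  ultimately show ?thesis using partition_onD1 by blast
qed

lemma block_through_rUR:
  assumes "block_through C (Suc n) m S"
  shows "block_through C n (Suc m) (rUR n m ` S)"
proof (rule block_through_image[OF assms])
  fix w v B assume wvB: "(w, v, B) \<in> C" "length w = Suc n" "length v = m"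
  then obtain w' a where "w = w' @ [a]" by (metis length_Suc_conv_rev)
  then have "(w', v @ [cinv a], image (rUR n m) ` B) \<in> C" "length w' = n"
    using nc_category_rUR wvB by auto
  then show "\<exists>w' v'. (w', v', image (rUR n m) ` B) \<in> C \<and> length w' = n \<and> length v' = Suc m"
    using wvB(3) by (intro exI[of _ "w'"] exI[of _ "v @ [cinv a]"]) simp
qed

lemma block_through_rUL:
  assumes "block_through C (Suc n) m S"
  shows "block_through C n (Suc m) (rUL ` S)"
proof (rule block_through_image[OF assms])
  fix w v B assume wvB: "(w, v, B) \<in> C" "length w = Suc n" "length v = m"
  then obtain a w' where "w = a # w'" by (metis length_Suc_conv)
  then have "(w', cinv a # v, image rUL ` B) \<in> C" "length w' = n"
    using nc_category_rUL wvB by auto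
  then show "\<exists>w' v'. (w', v', image rUL ` B) \<in> C \<and> length w' = n \<and> length v' = Suc m"
    using wvB(3) by (intro exI[of _ "w'"] exI[of _ "cinv a # v"]) simp
qed

lemma block_through_rLR:
  assumes "block_through C n (Suc m) S"
  shows "block_through C (Suc n) m (rLR n m ` S)"
proof (rule block_through_image[OF assms])
  fix w v B assume wvB: "(w, v, B) \<in> C" "length w = n" "length v = Suc m"
  then obtain v' a where "v = v' @ [a]" by (metis length_Suc_conv_rev)
  then have "(w @ [cinv a], v', image (rLR n m) ` B) \<in> C" "length v' = m"
    using nc_category_rLR wvB by auto
  then show "\<exists>w' v'. (w', v', image (rLR n m) ` B) \<in> C \<and> length w' = Suc n \<and> length v' = m"
    using wvB(2) by (intro exI[of _ "w @ [cinv a]"] exI[of _ "v'"]) simp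
qed

lemma block_through_iff_lower:
  "S \<subseteq> points n m \<Longrightarrow> block_through C n m S \<longleftrightarrow> block_through C 0 (n + m) (Lo ` lower_index n m ` S)"
proof (induction n arbitrary: m S)
  case 0
  have "Lo (lower_index 0 m x) = x" if "x \<in> S" for x
    using that 0 by (auto simp: points_def)
  then have "Lo ` lower_index 0 m ` S = S" by (simp add: image_image)
  then show ?case by simp
next
  case (Suc n)
  let ?S = "rUR n m ` S"
  have "block_through C (Suc n) m S \<longleftrightarrow> block_through C n (Suc m) ?S"
  proof
    assume "block_through C n (Suc m) ?S"
    moreover have "rLR n m ` ?S = S"
      using Suc.prems rLR_rUR by (simp add: image_image subset_iff)
    ultimately show "block_through C (Suc n) m S" using block_through_rLR by metis
  qed (rule block_through_rUR)
  also have "\<dots> \<longleftrightarrow> block_through C 0 (n + Suc m) (Lo ` lower_index n (Suc m) ` ?S)"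
    using Suc.IH[of "?S" "Suc m"] Suc.prems rUR_points by blast
  finally show ?case by (simp add: image_image lower_index_rUR)
qed

lemma block_through_rotate1:
  assumes "block_through C 0 N (Lo ` J)"
  shows "block_through C 0 N (Lo ` (\<lambda>j. Suc j mod N) ` J)"
proof (cases N)
  case 0
  then have "J = {}" using block_through_subset_points[OF assms] by (auto simp: points_def)
  then show ?thesis using assms by simp
next
  case (Suc m)
  have J: "j < Suc m" if "j \<in> J" for j
    using that block_through_subset_points[OF assms] Suc by (auto simp: points_def)
  have "block_through C 0 (Suc m) (rUL ` rLR 0 m ` Lo ` J)"
    using assms Suc block_through_rLR block_through_rUL by simp
  moreover have "rUL ` rLR 0 m ` Lo ` J = Lo ` (\<lambda>j. Suc j mod N) ` J"
  proof -
    have "rUL (rLR 0 m (Lo j)) = Lo (Suc j mod N)" if "j \<in> J" for j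
      using J[OF that] Suc by (cases "j = m") auto
    then show ?thesis unfolding image_image by (rule image_cong[OF refl])
  qed
  ultimately show ?thesis using Suc by simp
qed

lemma block_through_rotate:
  assumes "block_through C 0 N (Lo ` J)"
  shows "block_through C 0 N (Lo ` (\<lambda>j. (j + d) mod N) ` J)"
proof (induction d)
  case 0
  have "Lo ` J \<subseteq> points 0 N" using block_through_subset_points[OF assms] .
  then have "(\<lambda>j. j mod N) ` J = J" by (force simp: points_def)
  then show ?case using assms by simp
next
  case (Suc d)
  have "(\<lambda>j. Suc j mod N) ` (\<lambda>j. (j + d) mod N) ` J = (\<lambda>j. (j + Suc d) mod N) ` J"
    by (simp add: image_image mod_Suc_eq)
  then show ?case using block_through_rotate1[OF Suc] by simp
qed

text \<open>Rotate \<open>c\<close> to the last lower position, then raise the lower points from \<open>b\<close> on to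
  the upper row.\<close>
lemma block_through_raise_pair:
  assumes "block_through C 0 N (Lo ` {a, b, c})" "a < b" "b < c"
  shows "\<exists>l. block_through C (Suc (c - b)) (N - Suc (c - b)) {Lo l, Up 0, Up (c - b)}"
proof -
  have "c < N" using block_through_subset_points[OF assms(1)] by (auto simp: points_def)
  define d where "d = N - 1 - c"
  define k where "k = Suc (c - b)"
  let ?S = "{Lo (a + d), Up 0, Up (c - b)}"
  have "(\<lambda>j. (j + d) mod N) ` {a, b, c} = {a + d, b + d, N - 1}"
    using assms(2,3) \<open>c < N\<close> by (simp add: d_def)
  then have "block_through C 0 N (Lo ` {a + d, b + d, N - 1})"
    using block_through_rotate[OF assms(1), of d] by simp
  moreover have "Lo ` lower_index k (N - k) ` ?S = Lo ` {a + d, b + d, N - 1}"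
    and "k + (N - k) = N" and "?S \<subseteq> points k (N - k)"
    using assms(2,3) \<open>c < N\<close> by (auto simp: d_def k_def points_def)
  ultimately have "block_through C k (N - k) ?S"
    using block_through_iff_lower by metis
  then show ?thesis unfolding k_def by blast
qed

lemma nc_category_compose_adjoint_block:
  assumes "(w, v, B) \<in> C" "b \<in> B" "insert (Lo l) (Up ` I) \<subseteq> b" "i \<in> I"
  shows "\<exists>B'. (w, w, B') \<in> C \<and> (\<exists>b'\<in>B'. Up ` I \<union> Lo ` I \<subseteq> b')"
proof -
  have I: "I \<subseteq> {..<length w}"
    using block_through_subset_points[OF block_throughI[OF assms(1-3)]] by (auto simp: points_def)
  have l: "Lo l \<in> b" and U: "Up ` I \<subseteq> b" using assms(3) by auto
  obtain B' where B': "Defs.compose (w, v, B) (adjoint (w, v, B)) = (w, w, B')"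
    and "\<exists>b'\<in>B'. Up ` I \<union> Lo ` I \<subseteq> b'"
    using compose_adjoint_block[OF assms(2) l U assms(4) I] by blast
  moreover have "(v, w, image swp ` B) \<in> C"
    using nc_category_adjoint[OF assms(1)] by (simp add: adjoint_def)
  then have "Defs.compose (w, v, B) (adjoint (w, v, B)) \<in> C"
    unfolding adjoint_def using nc_category_compose[OF assms(1)] by simp
  ultimately show ?thesis by (intro exI[of _ B']) simp
qed

lemma block_through_compose_adjoint:
  assumes "block_through C n m (insert (Lo l) (Up ` I))" "i \<in> I"
  shows "block_through C n n (Up ` I \<union> Lo ` I)"
proof -
  obtain w v B b where wvB: "(w, v, B) \<in> C" "length w = n" "b \<in> B" "insert (Lo l) (Up ` I) \<subseteq> b"
    using assms(1) unfolding block_through_def by blast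
  then obtain B' b' where "(w, w, B') \<in> C" "b' \<in> B'" "Up ` I \<union> Lo ` I \<subseteq> b'"
    using nc_category_compose_adjoint_block[OF wvB(1,3,4) assms(2)] by blast
  then have "block_through C (length w) (length w) (Up ` I \<union> Lo ` I)"
    by (rule block_throughI)
  then show ?thesis using wvB(2) by simp
qed

lemma one_block_of_pair_block:
  assumes "(w, v, B) \<in> C" "length w = 2" "b \<in> B" "{Lo l, Up 0, Up 1} \<subseteq> b"
  shows "one_block w w \<in> C"
proof -
  have "insert (Lo l) (Up ` {0, 1}) \<subseteq> b" using assms(4) by auto
  then have "\<exists>B'. (w, w, B') \<in> C \<and> (\<exists>b'\<in>B'. Up ` {0, 1} \<union> Lo ` {0, 1} \<subseteq> b')"
    by (rule nc_category_compose_adjoint_block[OF assms(1,3) _ insertI1])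
  then obtain B' b' where inC: "(w, w, B') \<in> C" and b': "b' \<in> B'"
    and sub: "Up ` {0, 1} \<union> Lo ` {0, 1} \<subseteq> b'"
    by blast
  have "Up ` {0, 1} \<union> Lo ` {0, 1} = points (length w) (length w)"
    using assms(2) by (auto simp: points2)
  then have "points (length w) (length w) \<subseteq> b'" using sub by simp
  then have "(w, w, B') = one_block w w"
    by (rule part_eq_one_block[OF in_nc_category_is_part[OF inC] b'])
  then show ?thesis using inC by simp
qed

lemma one_block_pair_rotate:
  assumes "one_block [a, b] [a, b] \<in> C"
  shows "one_block [b, cinv b] [b, cinv b] \<in> C"
proof -
  let ?P = "points 2 2"
  have "(a # [b], [a, b], {?P}) \<in> C"
    using assms by (simp add: one_block_def numeral_2_eq_2)
  then have "([b], [cinv a, a] @ [b], {rUL ` ?P}) \<in> C"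
    using nc_category_rUL by fastforce
  then have "([b] @ [cinv b], [cinv a, a], image (rLR (length [b]) (length [cinv a, a])) ` {rUL ` ?P}) \<in> C"
    by (rule nc_category_rLR)
  then have inC: "([b, cinv b], [cinv a, a], {rLR 1 2 ` rUL ` ?P}) \<in> C"
    by (simp add: numeral_2_eq_2)
  have "{Lo 0, Up 0, Up 1} \<subseteq> rLR 1 2 ` rUL ` ?P"
    by (simp add: points2)
  from one_block_of_pair_block[OF inC _ singletonI this] show ?thesis by simp
qed

lemma one_block_pair_of_three_points:
  assumes "block_through C n m S" "3 \<le> card S"
  shows "\<exists>w. length w = 2 \<and> one_block w w \<in> C"
proof -
  have S: "S \<subseteq> points n m" using block_through_subset_points[OF assms(1)] .
  let ?J = "lower_index n m ` S"
  have "card ?J = card S" using S inj_on_lower_index by (meson card_image inj_on_subset)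
  then obtain a b c where abc: "a < b" "b < c" "{a, b, c} \<subseteq> ?J"
    using assms(2) three_le_card_obtain_less by metis
  have "block_through C 0 (n + m) (Lo ` ?J)"
    using block_through_iff_lower[OF S] assms(1) by simp
  then have "block_through C 0 (n + m) (Lo ` {a, b, c})"
    by (rule block_through_mono) (use abc(3) in blast)
  from block_through_raise_pair[OF this abc(1,2)] obtain l
    where "block_through C (Suc (c - b)) (n + m - Suc (c - b)) {Lo l, Up 0, Up (c - b)}" ..
  moreover define k where "k = c - b"
  ultimately have "block_through C (Suc k) (n + m - Suc k) (insert (Lo l) (Up ` {0, k}))"
    by (simp add: insert_commute)
  then have "block_through C (Suc k) (Suc k) (Up ` {0, k} \<union> Lo ` {0, k})"
    by (rule block_through_compose_adjoint) (rule insertI1)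
  then have "block_through C (Suc k) (Suc k) {Up k, Lo 0, Lo k}"
    by (rule block_through_mono) blast
  moreover have "Lo ` lower_index (Suc k) (Suc k) ` {Up k, Lo 0, Lo k} = Lo ` {0, k, Suc k}"
    by auto
  ultimately have "block_through C 0 (Suc k + Suc k) (Lo ` {0, k, Suc k})"
    using block_through_iff_lower[OF block_through_subset_points] by metis
  moreover have "0 < k" using abc(2) k_def by simp
  \<comment> \<open>\<open>k\<close> and \<open>Suc k\<close> are now adjacent, so raising again leaves only two upper points.\<close>
  ultimately obtain l' where "block_through C 2 (Suc k + Suc k - 2) {Lo l', Up 0, Up 1}"
    using block_through_raise_pair[of "Suc k + Suc k" 0 k "Suc k"] by (auto simp: numeral_2_eq_2)
  then obtain w v B b' where "(w, v, B) \<in> C" "length w = 2" "b' \<in> B" "{Lo l', Up 0, Up 1} \<subseteq> b'"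
    unfolding block_through_def by blast
  then show ?thesis using one_block_of_pair_block by blast
qed

end

theorem lemma6p1:
  fixes C :: "col part set"
  assumes "nc_category id C"
    and "\<forall>(w, v, B)\<in>C. \<forall>b\<in>B. even (card b)"
    and "\<exists>(w, v, B)\<in>C. \<exists>b\<in>B. card b \<ge> 4"
  shows "one_block [X, X] [X, X] \<in> C \<or> one_block [Y, Y] [Y, Y] \<in> C"
proof -
  obtain w v B b where "(w, v, B) \<in> C" "b \<in> B" "4 \<le> card b"
    using assms(3) by blast
  then have "block_through C (length w) (length v) b" "3 \<le> card b"
    by (simp_all add: block_throughI)
  then obtain u where "length u = 2" "one_block u u \<in> C"
    using one_block_pair_of_three_points[OF assms(1)] by blast
  moreover from \<open>length u = 2\<close> obtain c c' where "u = [c, c']"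
    by (cases u; cases "tl u") (auto simp: numeral_2_eq_2)
  ultimately have "one_block [c, c'] [c, c'] \<in> C" by simp
  then have "one_block [c', c'] [c', c'] \<in> C"
    using one_block_pair_rotate[OF assms(1)] by simp
  then show ?thesis by (cases c') auto
qed

end
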